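(* Let $p>1$, $x^0\in\mathbb{R}^n$, and let $\varphi:\mathbb{R}^n\to\mathbb{R}\cup\{+\infty\}$ be a proper lower semicontinuous coercive function. If for some $r>0$ and $\lambda\in\mathbb{R}$ we have $\{x:\varphi(x)\le\varphi(x^0)+\lambda\}\subseteq\mathbb{B}(0;r)$, then there exists $\hat\gamma>0$ such that for each $\gamma\in(0,\hat\gamma]$, $\{x:\varphi^p_\gamma(x)\le\varphi^p_\gamma(x^0)+\lambda\}\subseteq\mathbb{B}(0;r)$.
   Context: $\varphi^p_\gamma(x):=\inf_{y\in\mathbb{R}^n}\big(\varphi(y)+\frac{1}{p\gamma}\|x-y\|^p\big)$ (high-order Moreau envelope); $\mathbb{B}(0;r)$ is the open Euclidean ball of radius $r$ centered at the origin. *)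

theory Defs
  imports "HOL-Analysis.Analysis" "HOL-Library.Extended_Real"
begin

definition proper_fun :: "('a \<Rightarrow> ereal) \<Rightarrow> bool" where
  "proper_fun \<phi> \<longleftrightarrow> (\<forall>x. \<phi> x \<noteq> -\<infinity>) \<and> (\<exists>x. \<phi> x < \<infinity>)"

definition lsc :: "('a::topological_space \<Rightarrow> ereal) \<Rightarrow> bool" where
  "lsc \<phi> \<longleftrightarrow> (\<forall>x. \<phi> x \<le> Liminf (at x) \<phi>)"

definition coercive :: "('a::real_normed_vector \<Rightarrow> ereal) \<Rightarrow> bool" where
  "coercive \<phi> \<longleftrightarrow> filterlim \<phi> at_top at_infinity"

definition moreau_env :: "('a::real_normed_vector \<Rightarrow> ereal) \<Rightarrow> real \<Rightarrow> real \<Rightarrow> 'a \<Rightarrow> ereal" where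
  "moreau_env \<phi> p \<gamma> x = (INF y. \<phi> y + ereal (norm (x - y) powr p / (p * \<gamma>)))"

end

theory Submission
  imports Defs
begin

text \<open>Since \<open>\<phi>\<close> is lower semicontinuous and coercive, its sublevel sets are compact, so
  \<open>{\<phi> \<le> \<phi>(x\<^sup>0) + \<lambda>}\<close> stays inside the open ball even after raising the level by some
  \<open>\<epsilon> > 0\<close>, and the compact set \<open>S = {\<phi> \<le> \<phi>(x\<^sup>0) + \<lambda> + \<epsilon>}\<close> then has positive distance \<open>d\<close>
  from the complement of the ball. \<open>\<phi>\<close> is also bounded below by some \<open>m\<close>. For \<open>x\<close> outside
  the ball, every \<open>y\<close> in the infimum defining \<open>\<phi>\<^sup>p\<^sub>\<gamma>(x)\<close> either lies outside \<open>S\<close>, or pays a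
  penalty \<open>d\<^sup>p/(p\<gamma>)\<close>, which exceeds the gap between \<open>m\<close> and the level of \<open>S\<close> once \<open>\<gamma>\<close> is small.
  Hence \<open>\<phi>\<^sup>p\<^sub>\<gamma>(x) \<ge> \<phi>(x\<^sup>0) + \<lambda> + \<epsilon> > \<phi>\<^sup>p\<^sub>\<gamma>(x\<^sup>0) + \<lambda>\<close>, using \<open>\<phi>\<^sup>p\<^sub>\<gamma> \<le> \<phi>\<close>.\<close>

lemma lsc_imp_open_superlevel:
  fixes \<phi> :: "'a::topological_space \<Rightarrow> ereal"
  assumes "lsc \<phi>"
  shows "open {y. a < \<phi> y}"
proof (rule Topological_Spaces.openI)
  fix x assume "x \<in> {y. a < \<phi> y}"
  then have "a < Liminf (at x) \<phi>"
    using assms order_less_le_trans unfolding lsc_def by blast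
  then have "eventually (\<lambda>y. a < \<phi> y) (at x)" by (rule less_LiminfD)
  then obtain U where "open U" "x \<in> U" "\<And>y. y \<in> U \<Longrightarrow> y \<noteq> x \<Longrightarrow> a < \<phi> y"
    unfolding eventually_at_topological by blast
  then show "\<exists>T. open T \<and> x \<in> T \<and> T \<subseteq> {y. a < \<phi> y}"
    using \<open>x \<in> {y. a < \<phi> y}\<close> by blast
qed

lemma lsc_imp_closed_sublevel:
  fixes \<phi> :: "'a::topological_space \<Rightarrow> ereal"
  assumes "lsc \<phi>"
  shows "closed {y. \<phi> y \<le> a}"
proof -
  have "{y. \<phi> y \<le> a} = - {y. a < \<phi> y}" by auto
  then show ?thesis using lsc_imp_open_superlevel[OF assms] by (simp add: closed_def)
qed

text \<open>Finitely many of the open sets \<open>{b < \<phi>}\<close> with real \<open>b > a\<close> cover \<open>K\<close>; take the least such \<open>b\<close>.\<close>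

lemma lsc_compact_raise_strict_lower_bound:
  fixes \<phi> :: "'a::topological_space \<Rightarrow> ereal"
  assumes "lsc \<phi>" "compact K" "a < \<infinity>" "\<And>y. y \<in> K \<Longrightarrow> a < \<phi> y"
  obtains b :: real where "a < ereal b" "\<And>y. y \<in> K \<Longrightarrow> ereal b < \<phi> y"
proof -
  have "K \<subseteq> (\<Union>b\<in>{b. a < ereal b}. {y. ereal b < \<phi> y})"
    using assms(4) ereal_dense2 by blast
  then obtain D where D: "D \<subseteq> {b. a < ereal b}" "finite D"
      "K \<subseteq> (\<Union>b\<in>D. {y. ereal b < \<phi> y})"
    using compactE_image[OF assms(2) lsc_imp_open_superlevel[OF assms(1)]] by metis
  obtain b0 where "a < ereal b0" using ereal_dense2[OF assms(3)] by blast
  define b where "b = Min (insert b0 D)"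
  have "a < ereal b"
    using D(1,2) \<open>a < ereal b0\<close> Min_in[of "insert b0 D"] unfolding b_def by auto
  moreover have "ereal b < \<phi> y" if "y \<in> K" for y
  proof -
    obtain d where "d \<in> D" "ereal d < \<phi> y" using D(3) \<open>y \<in> K\<close> by blast
    moreover have "b \<le> d" using \<open>d \<in> D\<close> D(2) unfolding b_def by simp
    ultimately show ?thesis by (meson ereal_less_eq(3) order_le_less_trans)
  qed
  ultimately show thesis using that by blast
qed

lemma coercive_eventually_above:
  fixes \<phi> :: "'a::real_normed_vector \<Rightarrow> ereal"
  assumes "coercive \<phi>"
  obtains R where "\<And>y. R \<le> norm y \<Longrightarrow> ereal c < \<phi> y"
proof -
  have "eventually (\<lambda>y. ereal (c + 1) \<le> \<phi> y) at_infinity"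
    using assms unfolding coercive_def filterlim_at_top by blast
  then have "eventually (\<lambda>y. ereal c < \<phi> y) at_infinity"
    by (rule eventually_mono) (auto intro: less_le_trans[of _ "ereal (c + 1)"])
  then show thesis using that unfolding eventually_at_infinity by blast
qed

lemma coercive_lsc_bounded_below:
  fixes \<phi> :: "'a::{real_normed_vector, heine_borel} \<Rightarrow> ereal"
  assumes "lsc \<phi>" "coercive \<phi>" "\<And>y. \<phi> y \<noteq> -\<infinity>"
  obtains m :: real where "\<And>y. ereal m \<le> \<phi> y"
proof -
  obtain R where R: "\<And>y. R \<le> norm y \<Longrightarrow> ereal 0 < \<phi> y"
    using coercive_eventually_above[OF assms(2)] by blast
  obtain b where b: "\<And>y. y \<in> cball 0 R \<Longrightarrow> ereal b < \<phi> y"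
    using lsc_compact_raise_strict_lower_bound[OF assms(1) compact_cball, of "-\<infinity>" 0 R] assms(3)
    by auto
  have "ereal (min b 0) \<le> \<phi> y" for y
    using R[of y] b[of y] by (cases "R \<le> norm y") (auto simp: min_le_iff_disj dest: less_imp_le)
  then show thesis using that by blast
qed

lemma coercive_lsc_compact_sublevel:
  fixes \<phi> :: "'a::{real_normed_vector, heine_borel} \<Rightarrow> ereal"
  assumes "lsc \<phi>" "coercive \<phi>"
  shows "compact {y. \<phi> y \<le> ereal c}"
proof -
  obtain R where R: "\<And>y. R \<le> norm y \<Longrightarrow> ereal c < \<phi> y"
    using coercive_eventually_above[OF assms(2)] by blast
  have "{y. \<phi> y \<le> ereal c} \<subseteq> ball 0 R"
    using R by (force simp: not_le)
  then have "bounded {y. \<phi> y \<le> ereal c}" by (rule bounded_subset[OF bounded_ball])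
  then show ?thesis
    using lsc_imp_closed_sublevel[OF assms(1)] by (simp add: compact_eq_bounded_closed)
qed

text \<open>Outside a large ball coercivity keeps \<open>\<phi>\<close> above the raised level, and on the compact rest
  of the complement of \<open>U\<close> the function \<open>\<phi>\<close> is uniformly above the level.\<close>

lemma coercive_lsc_sublevel_margin:
  fixes \<phi> :: "'a::{real_normed_vector, heine_borel} \<Rightarrow> ereal"
  assumes "lsc \<phi>" "coercive \<phi>" "open U" "{y. \<phi> y \<le> ereal c} \<subseteq> U"
  obtains \<epsilon> where "\<epsilon> > 0" "{y. \<phi> y \<le> ereal (c + \<epsilon>)} \<subseteq> U"
proof -
  obtain R where R: "\<And>y. R \<le> norm y \<Longrightarrow> ereal (c + 1) < \<phi> y"
    using coercive_eventually_above[OF assms(2)] by blast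
  have "compact (cball 0 R - U)" using assms(3) by (simp add: compact_diff)
  moreover have "ereal c < \<phi> y" if "y \<in> cball 0 R - U" for y
  proof -
    have "\<not> \<phi> y \<le> ereal c" using assms(4) that by blast
    then show ?thesis by simp
  qed
  ultimately obtain b where "ereal c < ereal b" and b: "\<And>y. y \<in> cball 0 R - U \<Longrightarrow> ereal b < \<phi> y"
    using lsc_compact_raise_strict_lower_bound[OF assms(1), of "cball 0 R - U" "ereal c"] by auto
  define \<epsilon> where "\<epsilon> = min 1 (b - c)"
  have "y \<in> U" if "\<phi> y \<le> ereal (c + \<epsilon>)" for y
  proof (rule ccontr)
    assume "y \<notin> U"
    have "ereal (c + \<epsilon>) < \<phi> y"
    proof (cases "R \<le> norm y")
      case True
      have "ereal (c + \<epsilon>) \<le> ereal (c + 1)" unfolding \<epsilon>_def by simp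
      then show ?thesis using R[OF True] by (rule order_le_less_trans)
    next
      case False
      have "ereal (c + \<epsilon>) \<le> ereal b" unfolding \<epsilon>_def by simp
      also have "ereal b < \<phi> y" using b False \<open>y \<notin> U\<close> by simp
      finally show ?thesis .
    qed
    then show False using that by simp
  qed
  moreover have "\<epsilon> > 0" using \<open>ereal c < ereal b\<close> unfolding \<epsilon>_def by simp
  ultimately show thesis using that by blast
qed

lemma moreau_env_le: "moreau_env \<phi> p \<gamma> x \<le> \<phi> x"
  unfolding moreau_env_def by (rule INF_lower2[of x]) auto

text \<open>Points of the sublevel set at level \<open>t\<close> pay a penalty of at least \<open>d\<^sup>p/(p\<gamma>) \<ge> t - m\<close>.\<close>

lemma moreau_env_ge_level:
  fixes \<phi> :: "'a::real_normed_vector \<Rightarrow> ereal"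
  assumes "p > 0" "\<gamma> > 0" "d \<ge> 0" "\<And>y. ereal m \<le> \<phi> y"
    and "\<And>y. \<phi> y \<le> ereal t \<Longrightarrow> d \<le> dist x y"
    and "(t - m) * (p * \<gamma>) \<le> d powr p"
  shows "ereal t \<le> moreau_env \<phi> p \<gamma> x"
  unfolding moreau_env_def
proof (rule INF_greatest)
  fix y
  define pen where "pen = norm (x - y) powr p / (p * \<gamma>)"
  have "pen \<ge> 0" using assms(1,2) unfolding pen_def by simp
  show "ereal t \<le> \<phi> y + ereal pen"
  proof (cases "\<phi> y \<le> ereal t")
    case True
    have "d powr p \<le> norm (x - y) powr p"
      using assms(5)[OF True] assms(3) by (simp add: dist_norm powr_mono2 assms(1) less_imp_le)
    then have "t - m \<le> pen"
      using assms(1,2,6) unfolding pen_def by (simp add: pos_le_divide_eq)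
    then have "ereal t \<le> ereal m + ereal pen" by simp
    also have "\<dots> \<le> \<phi> y + ereal pen" using assms(4) by (rule add_right_mono)
    finally show ?thesis .
  next
    case False
    then have "ereal t \<le> \<phi> y + ereal 0" by simp
    also have "\<dots> \<le> \<phi> y + ereal pen" using \<open>pen \<ge> 0\<close> by (intro add_left_mono) simp
    finally show ?thesis .
  qed
qed

lemma moreau_env_sublevel_subset_open:
  fixes \<phi> :: "'a::{real_normed_vector, heine_borel} \<Rightarrow> ereal"
  assumes "p > 0" "lsc \<phi>" "coercive \<phi>" "\<And>y. \<phi> y \<noteq> -\<infinity>"
    and "open U" "{y. \<phi> y \<le> ereal c} \<subseteq> U"
  obtains \<gamma>hat where "\<gamma>hat > 0"
    "\<And>\<gamma>. 0 < \<gamma> \<Longrightarrow> \<gamma> \<le> \<gamma>hat \<Longrightarrow> {x. moreau_env \<phi> p \<gamma> x \<le> ereal c} \<subseteq> U"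
proof -
  obtain \<epsilon> where \<epsilon>: "\<epsilon> > 0" and "{y. \<phi> y \<le> ereal (c + \<epsilon>)} \<subseteq> U"
    using coercive_lsc_sublevel_margin[OF assms(2,3,5,6)] by blast
  then have "{y. \<phi> y \<le> ereal (c + \<epsilon>)} \<inter> - U = {}" by blast
  then obtain d where d: "d > 0" "\<forall>y\<in>{y. \<phi> y \<le> ereal (c + \<epsilon>)}. \<forall>x\<in>- U. d \<le> dist y x"
    using separate_compact_closed[OF coercive_lsc_compact_sublevel[OF assms(2,3)] closed_Compl[OF assms(5)]]
    by blast
  obtain m where m: "\<And>y. ereal m \<le> \<phi> y"
    using coercive_lsc_bounded_below[OF assms(2,3,4)] by blast
  define \<gamma>hat where "\<gamma>hat = d powr p / (p * max 1 (c + \<epsilon> - m))"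
  have "\<gamma>hat > 0" using d(1) assms(1) unfolding \<gamma>hat_def by simp
  moreover have "x \<in> U" if \<gamma>: "0 < \<gamma>" "\<gamma> \<le> \<gamma>hat" and x: "moreau_env \<phi> p \<gamma> x \<le> ereal c"
    for \<gamma> x
  proof (rule ccontr)
    assume "x \<notin> U"
    have "(c + \<epsilon> - m) * (p * \<gamma>) \<le> max 1 (c + \<epsilon> - m) * (p * \<gamma>hat)"
      using \<gamma> assms(1) by (intro mult_mono) auto
    also have "\<dots> = d powr p" using assms(1) unfolding \<gamma>hat_def by simp
    finally have gap: "(c + \<epsilon> - m) * (p * \<gamma>) \<le> d powr p" .
    have sep: "d \<le> dist x y" if "\<phi> y \<le> ereal (c + \<epsilon>)" for y
      using d(2) that \<open>x \<notin> U\<close> by (metis ComplI dist_commute mem_Collect_eq)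
    have "ereal (c + \<epsilon>) \<le> moreau_env \<phi> p \<gamma> x"
      using moreau_env_ge_level[OF assms(1) \<gamma>(1) less_imp_le[OF d(1)] m sep gap] .
    also have "\<dots> \<le> ereal c" by (rule x)
    finally show False using \<epsilon> by simp
  qed
  ultimately show thesis using that by blast
qed

theorem corollary1:
  fixes \<phi> :: "real ^ 'n \<Rightarrow> ereal" and x0 :: "real ^ 'n" and p r lam :: real
  assumes "p > 1"
    and "proper_fun \<phi>" and "lsc \<phi>" and "coercive \<phi>"
    and "r > 0"
    and "{x. \<phi> x \<le> \<phi> x0 + ereal lam} \<subseteq> ball 0 r"
  shows "\<exists>\<gamma>hat>0. \<forall>\<gamma>. 0 < \<gamma> \<and> \<gamma> \<le> \<gamma>hat \<longrightarrow>
           {x. moreau_env \<phi> p \<gamma> x \<le> moreau_env \<phi> p \<gamma> x0 + ereal lam} \<subseteq> ball 0 r"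
proof -
  have "\<phi> x0 \<noteq> \<infinity>"
  proof
    assume "\<phi> x0 = \<infinity>"
    then have "UNIV \<subseteq> ball (0::real^'n) r" using assms(6) by auto
    then show False using bounded_subset[OF bounded_ball] not_bounded_UNIV by blast
  qed
  then obtain a where a: "\<phi> x0 = ereal a"
    using assms(2) unfolding proper_fun_def by (cases "\<phi> x0") auto
  have "{y. \<phi> y \<le> ereal (a + lam)} \<subseteq> ball 0 r" using assms(6) a by simp
  moreover have "p > 0" using assms(1) by simp
  moreover have "\<And>y. \<phi> y \<noteq> -\<infinity>" using assms(2) unfolding proper_fun_def by blast
  ultimately obtain \<gamma>hat where "\<gamma>hat > 0" and \<gamma>hat:
      "\<And>\<gamma>. 0 < \<gamma> \<Longrightarrow> \<gamma> \<le> \<gamma>hat \<Longrightarrow> {x. moreau_env \<phi> p \<gamma> x \<le> ereal (a + lam)} \<subseteq> ball 0 r"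
    using moreau_env_sublevel_subset_open[OF _ assms(3,4) _ open_ball] by metis
  show ?thesis
  proof (intro exI[of _ \<gamma>hat] conjI allI impI)
    fix \<gamma> assume "0 < \<gamma> \<and> \<gamma> \<le> \<gamma>hat"
    have "moreau_env \<phi> p \<gamma> x0 + ereal lam \<le> ereal a + ereal lam"
      using moreau_env_le[of \<phi> p \<gamma> x0] a by (intro add_right_mono) simp
    then have "{x. moreau_env \<phi> p \<gamma> x \<le> moreau_env \<phi> p \<gamma> x0 + ereal lam}
        \<subseteq> {x. moreau_env \<phi> p \<gamma> x \<le> ereal (a + lam)}"
      by (auto intro: order_trans)
    also have "\<dots> \<subseteq> ball 0 r" using \<gamma>hat \<open>0 < \<gamma> \<and> \<gamma> \<le> \<gamma>hat\<close> by blast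
    finally show "{x. moreau_env \<phi> p \<gamma> x \<le> moreau_env \<phi> p \<gamma> x0 + ereal lam} \<subseteq> ball 0 r" .
  qed (rule \<open>\<gamma>hat > 0\<close>)
qed

end
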